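(* Let $0<\lambda<1$ and $0<p<1$. Consider the functions \[ f(z)=\frac{z}{1-\frac{z}{p}+\lambda z\int_z^p\omega(t)\,dt}, \] where $\omega$ ranges over all functions analytic in $\mathbb{D}=\{z:|z|<1\}$ with $|\omega(z)|\le1$ on $\mathbb{D}$; these are exactly the functions in $\mathcal{U}_m(\lambda)$ with a simple pole at $p$. Write $f(z)=z+\sum_{k\ge2}a_kz^k$ for $|z|<p$. Then the region of variability of the coefficient $a_2$ is the closed disk \[ \left\{\frac1p-\lambda p u:\ u\in\overline{\mathbb{D}}\right\}, \] and \[ \frac1p-\lambda p\le |a_2|\le \frac1p+\lambda p. \]
   Context: For $\lambda\in(0,1)$ and $p\in(0,1)$, $\mathcal{U}_m(\lambda)$ denotes the family of functions $f$ meromorphic in $\mathbb{D}$ with a pole at $z=p$, having a Taylor expansion $f(z)=z+\sum_{k=2}^\infty a_k z^k$ for $|z|<p$, and satisfying $\left|\frac{z}{f(z)}-z\left(\frac{z}{f(z)}\right)'-1\right|<\lambda$ for every $z\in\mathbb{D}$. The integral is along any path in $\mathbb{D}$ from $z$ to $p$. *)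

theory Defs
  imports "HOL-Complex_Analysis.Complex_Analysis"
begin

text \<open>The function
  f(z) = z / (1 - z/p + lambda z \<integral>_z^p \<omega>(t) dt),
  the integral taken along the straight segment from z to p (any path in the
  unit disk gives the same value since \<omega> is holomorphic in the disk).\<close>
definition Um_fun :: "real \<Rightarrow> real \<Rightarrow> (complex \<Rightarrow> complex) \<Rightarrow> complex \<Rightarrow> complex" where
  "Um_fun lam p \<omega> z =
     z / (1 - z / complex_of_real p
          + complex_of_real lam * z * contour_integral (linepath z (complex_of_real p)) \<omega>)"

definition taylor_coeff0 :: "(complex \<Rightarrow> complex) \<Rightarrow> nat \<Rightarrow> complex" where
  "taylor_coeff0 f k = (deriv ^^ k) f 0 / fact k"

end

theory Submission
  imports Defs
begin

text \<open>With F a primitive of \<omega> in the disk, \<integral>_z^p \<omega> = F(p) - F(z), so the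
  denominator D(z) = 1 - z/p + lam z \<integral>_z^p \<omega> of f = z / D is holomorphic in the
  disk with D(0) = 1, whence a_2 = -D'(0) = 1/p - lam \<integral>_0^p \<omega>.  Since |\<omega>| \<le> 1,
  the integral over [0, p] has modulus at most p, so a_2 = 1/p - lam p u with
  |u| \<le> 1; the constant functions \<omega> = u attain every such value.\<close>

lemma has_field_derivative_contour_integral_linepath_start:
  fixes \<omega> :: "complex \<Rightarrow> complex"
  assumes "\<omega> holomorphic_on S" "open S" "convex S" "a \<in> S" "z \<in> S"
  shows "((\<lambda>w. contour_integral (linepath w a) \<omega>) has_field_derivative - \<omega> z) (at z)"
proof -
  obtain F where F: "\<And>x. x \<in> S \<Longrightarrow> (F has_field_derivative \<omega> x) (at x within S)"
    using holomorphic_convex_primitive' assms(1-3) by blast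
  have integral_eq: "contour_integral (linepath w a) \<omega> = F a - F w" if "w \<in> S" for w
  proof -
    have "path_image (linepath w a) \<subseteq> S"
      using \<open>convex S\<close> \<open>a \<in> S\<close> \<open>w \<in> S\<close> by (simp add: closed_segment_subset)
    from contour_integral_primitive[OF F valid_path_linepath this]
    show ?thesis by (simp add: contour_integral_unique)
  qed
  have "((\<lambda>w. F a - F w) has_field_derivative - \<omega> z) (at z)"
    using F[OF \<open>z \<in> S\<close>] at_within_open[OF \<open>z \<in> S\<close> \<open>open S\<close>]
    by (auto intro!: derivative_eq_intros)
  then show ?thesis
    using has_field_derivative_transform_within_open[of "\<lambda>w. F a - F w"] assms(2,5) integral_eq
    by fastforce
qed

lemma higher_deriv_2_id_divide_at_0:
  fixes D :: "complex \<Rightarrow> complex"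
  assumes "D holomorphic_on S" "open S" "0 \<in> S" "D 0 = 1"
  shows "(deriv ^^ 2) (\<lambda>z. z / D z) 0 = - 2 * deriv D 0"
proof -
  have D_deriv: "(D has_field_derivative deriv D 0) (at 0)"
    using assms(1-3) holomorphic_derivI by blast
  have "D analytic_on {0}"
    using assms(1-3) analytic_at by blast
  then have "(\<lambda>z. inverse (D z)) analytic_on {0}"
    using assms(4) by (intro analytic_intros) auto
  moreover have inverse_deriv: "deriv (\<lambda>z. inverse (D z)) 0 = - deriv D 0"
    using D_deriv assms(4) by (intro DERIV_imp_deriv) (auto intro!: derivative_eq_intros)
  ultimately have "(deriv ^^ 2) (\<lambda>z. z * inverse (D z)) 0
      = (\<Sum>i=0..2. of_nat (2 choose i) * (deriv ^^ i) (\<lambda>z. z) 0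
                     * (deriv ^^ (2 - i)) (\<lambda>z. inverse (D z)) 0)"
    by (intro higher_deriv_mult_at) (auto intro: analytic_intros)
  also have "\<dots> = 2 * deriv (\<lambda>z. inverse (D z)) 0"
    by (simp add: numeral_2_eq_2 atLeast0_atMost_Suc)
  finally have "(deriv ^^ 2) (\<lambda>z. z * inverse (D z)) 0 = - 2 * deriv D 0"
    using inverse_deriv by simp
  then show ?thesis
    by (simp add: divide_inverse)
qed

lemma taylor_coeff0_2_Um_fun:
  fixes lam p :: real and \<omega> :: "complex \<Rightarrow> complex"
  assumes "\<omega> holomorphic_on ball 0 1" "0 < p" "p < 1"
  shows "taylor_coeff0 (Um_fun lam p \<omega>) 2
           = 1 / p - lam * contour_integral (linepath 0 (complex_of_real p)) \<omega>"
proof -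
  define D where "D z = 1 - z / complex_of_real p
                      + complex_of_real lam * z * contour_integral (linepath z (complex_of_real p)) \<omega>"
    for z
  have D_deriv: "(D has_field_derivative
       - 1 / p + lam * contour_integral (linepath z (complex_of_real p)) \<omega> - lam * z * \<omega> z) (at z)"
    if "z \<in> ball 0 1" for z :: complex
  proof -
    have "((\<lambda>w. contour_integral (linepath w (complex_of_real p)) \<omega>) has_field_derivative - \<omega> z) (at z)"
      using assms that
      by (intro has_field_derivative_contour_integral_linepath_start[of _ "ball 0 1"]) auto
    then show ?thesis
      unfolding D_def using assms(2) by (auto intro!: derivative_eq_intros simp: field_simps)
  qed
  have "D holomorphic_on ball 0 1"
    using D_deriv holomorphic_on_open open_ball by blast
  then have "(deriv ^^ 2) (\<lambda>z. z / D z) 0 = - 2 * deriv D 0"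
    by (rule higher_deriv_2_id_divide_at_0) (auto simp: D_def)
  moreover have "Um_fun lam p \<omega> = (\<lambda>z. z / D z)"
    by (auto simp: Um_fun_def D_def)
  moreover have "deriv D 0 = - 1 / p + lam * contour_integral (linepath 0 (complex_of_real p)) \<omega>"
    using DERIV_imp_deriv[OF D_deriv[of 0]] by simp
  ultimately show ?thesis
    by (simp add: taylor_coeff0_def)
qed

lemma norm_contour_integral_linepath_0_le:
  fixes \<omega> :: "complex \<Rightarrow> complex"
  assumes "\<omega> holomorphic_on ball 0 1" "\<forall>w\<in>ball 0 1. norm (\<omega> w) \<le> 1" "z \<in> ball 0 1"
  shows "norm (contour_integral (linepath 0 z) \<omega>) \<le> norm z"
proof -
  have segment: "closed_segment 0 z \<subseteq> ball 0 1"
    using assms(3) by (simp add: closed_segment_subset)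
  then have "\<omega> contour_integrable_on linepath 0 z"
    using contour_integrable_holomorphic_simple[OF assms(1) open_ball valid_path_linepath] by simp
  then show ?thesis
    using contour_integral_bound_linepath[of \<omega> 0 z 1] segment assms(2) by auto
qed

lemma taylor_coeff0_2_Um_fun_in_disk:
  fixes lam p :: real and \<omega> :: "complex \<Rightarrow> complex"
  assumes "\<omega> holomorphic_on ball 0 1" "\<forall>z\<in>ball 0 1. norm (\<omega> z) \<le> 1" "0 < p" "p < 1"
  shows "\<exists>u. norm u \<le> 1 \<and>
    taylor_coeff0 (Um_fun lam p \<omega>) 2 = complex_of_real (1 / p) - complex_of_real (lam * p) * u"
proof (intro exI conjI)
  define J where "J = contour_integral (linepath 0 (complex_of_real p)) \<omega>"
  have "norm J \<le> p"
    unfolding J_def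
    using norm_contour_integral_linepath_0_le[OF assms(1,2), of "complex_of_real p"] assms(3,4)
    by simp
  then show "norm (J / complex_of_real p) \<le> 1"
    using assms(3) by (simp add: norm_divide)
  show "taylor_coeff0 (Um_fun lam p \<omega>) 2
          = complex_of_real (1 / p) - complex_of_real (lam * p) * (J / complex_of_real p)"
    using taylor_coeff0_2_Um_fun[OF assms(1,3,4)] assms(3) unfolding J_def by simp
qed

lemma taylor_coeff0_2_Um_fun_const:
  fixes lam p :: real
  assumes "0 < p" "p < 1"
  shows "taylor_coeff0 (Um_fun lam p (\<lambda>_. u)) 2
           = complex_of_real (1 / p) - complex_of_real (lam * p) * u"
  using taylor_coeff0_2_Um_fun[of "\<lambda>_. u", OF _ assms] by simp

lemma norm_of_real_diff_scaled_bounds: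
  fixes a b :: real and u :: complex
  assumes "0 \<le> a" "0 \<le> b" "norm u \<le> 1"
  shows "a - b \<le> norm (of_real a - of_real b * u) \<and> norm (of_real a - of_real b * u) \<le> a + b"
proof -
  have "norm (of_real b * u) \<le> b"
    using assms(2,3) by (simp add: norm_mult mult_left_le)
  then show ?thesis
    using norm_triangle_ineq2[of "of_real a" "of_real b * u"]
      norm_triangle_ineq4[of "of_real a" "of_real b * u"] assms(1)
    by auto
qed

theorem corollary1:
  fixes lam p :: real
  assumes "0 < lam" "lam < 1" "0 < p" "p < 1"
  shows "{taylor_coeff0 (Um_fun lam p \<omega>) 2 | \<omega>.
            \<omega> holomorphic_on ball 0 1 \<and> (\<forall>z\<in>ball 0 1. norm (\<omega> z) \<le> 1)}
         = {complex_of_real (1 / p) - complex_of_real (lam * p) * u | u. norm u \<le> 1}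
       \<and> (\<forall>\<omega>. \<omega> holomorphic_on ball 0 1 \<and> (\<forall>z\<in>ball 0 1. norm (\<omega> z) \<le> 1) \<longrightarrow>
            1 / p - lam * p \<le> norm (taylor_coeff0 (Um_fun lam p \<omega>) 2)
          \<and> norm (taylor_coeff0 (Um_fun lam p \<omega>) 2) \<le> 1 / p + lam * p)"
proof -
  note in_disk = taylor_coeff0_2_Um_fun_in_disk[OF _ _ assms(3,4), of _ lam]
  have "{taylor_coeff0 (Um_fun lam p \<omega>) 2 | \<omega>.
            \<omega> holomorphic_on ball 0 1 \<and> (\<forall>z\<in>ball 0 1. norm (\<omega> z) \<le> 1)}
         = {complex_of_real (1 / p) - complex_of_real (lam * p) * u | u. norm u \<le> 1}"
    (is "?values = ?disk")
  proof
    show "?values \<subseteq> ?disk"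
      using in_disk by blast
    show "?disk \<subseteq> ?values"
    proof
      fix x assume "x \<in> ?disk"
      then obtain u where "norm u \<le> 1"
        "x = complex_of_real (1 / p) - complex_of_real (lam * p) * u" by blast
      then show "x \<in> ?values"
        using taylor_coeff0_2_Um_fun_const[OF assms(3,4), of lam u]
        by (intro CollectI exI[of _ "\<lambda>_. u"]) simp
    qed
  qed
  moreover have "1 / p - lam * p \<le> norm (taylor_coeff0 (Um_fun lam p \<omega>) 2)
      \<and> norm (taylor_coeff0 (Um_fun lam p \<omega>) 2) \<le> 1 / p + lam * p"
    if "\<omega> holomorphic_on ball 0 1 \<and> (\<forall>z\<in>ball 0 1. norm (\<omega> z) \<le> 1)" for \<omega>
    using in_disk that norm_of_real_diff_scaled_bounds[of "1 / p" "lam * p"] assms(1,3) by force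
  ultimately show ?thesis
    by blast
qed

end
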